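(* Let $(V,d,k,q)$ be an instance of the individually fair $k$-center with outliers problem (IF$k$CO) as defined in the context, and let $(S,O,\sigma)$ be the solution output by the basic algorithm (Algorithm 2) described in the context. Then $$\alpha(S,O,\sigma)=\max_{i\in V\setminus O}\frac{d_{\sigma(i)i}}{NR_q(i)}\le 2.$$
   Context: IF$k$CO instance: a finite set $V$ with $|V|=n$, a metric $d$ on $V$ (nonnegative, symmetric, $d_{ii}=0$, triangle inequality), and integers $k\ge 1$ and $q\ge 0$. For $i\in V$, $NR_q(i)$ is the distance from $i$ to its $\lceil (n-q)/k\rceil$-th nearest neighbor in $V$, where $i$ counts as its own (first) nearest neighbor. A solution is $(S,O,\sigma)$ with $S,O\subseteq V$ and $\sigma:V\setminus O\to S$; its outlier-related fairness ratio is $\alpha(S,O,\sigma)=\max_{i\in V\setminus O} d_{\sigma(i)i}/NR_q(i)$. Algorithm 2: set $P:=V$, $S:=\emptyset$. While $P\neq\emptyset$ and $|S|<k$: pick $s\in P$ minimizing $NR_q(i)$ over $i\in P$; set $S:=S\cup\{s\}$ and $P:=\{i\in P: d_{is}>2\,NR_q(i)\}$. Then set $O:=P$ and, for each $i\in V\setminus O$, let $\sigma(i)$ be a center $h\in S$ minimizing $d_{ih}$. Output $(S,O,\sigma)$. *)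

theory Defs
  imports Complex_Main "HOL-Library.Multiset"
begin

definition is_metric_on :: "'a set \<Rightarrow> ('a \<Rightarrow> 'a \<Rightarrow> real) \<Rightarrow> bool" where
  "is_metric_on V d \<longleftrightarrow>
     (\<forall>i\<in>V. \<forall>j\<in>V. d i j \<ge> 0) \<and>
     (\<forall>i\<in>V. \<forall>j\<in>V. d i j = d j i) \<and>
     (\<forall>i\<in>V. d i i = 0) \<and>
     (\<forall>i\<in>V. \<forall>j\<in>V. \<forall>l\<in>V. d i l \<le> d i j + d j l)"

definition nr_rank :: "'a set \<Rightarrow> nat \<Rightarrow> nat \<Rightarrow> nat" where
  "nr_rank V k q = nat \<lceil>(real (card V) - real q) / real k\<rceil>"

text \<open>NR_q(i): distance from i to its m-th nearest neighbour in V (i itself counts,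
  being at distance 0), i.e. the m-th smallest element (1-indexed) of the multiset
  of distances from i to the points of V.\<close>
definition NR :: "'a set \<Rightarrow> ('a \<Rightarrow> 'a \<Rightarrow> real) \<Rightarrow> nat \<Rightarrow> nat \<Rightarrow> 'a \<Rightarrow> real" where
  "NR V d k q i =
     sorted_list_of_multiset (image_mset (d i) (mset_set V)) ! (nr_rank V k q - 1)"

definition alg2_step :: "'a set \<Rightarrow> ('a \<Rightarrow> 'a \<Rightarrow> real) \<Rightarrow> nat \<Rightarrow> nat
    \<Rightarrow> ('a set \<times> 'a set) \<Rightarrow> ('a set \<times> 'a set) \<Rightarrow> bool" where
  "alg2_step V d k q st st' \<longleftrightarrow>
     (let P = fst st; S = snd st in
       P \<noteq> {} \<and> card S < k \<and>
       (\<exists>s\<in>P. (\<forall>i\<in>P. NR V d k q s \<le> NR V d k q i) \<and>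
              st' = ({i\<in>P. d i s > 2 * NR V d k q i}, insert s S)))"

text \<open>(S, O) is a possible outcome of the loop (for some tie-breaking): the loop
  started at (V, {}) reaches (P, S) in which the loop condition fails, and Out = P.\<close>
definition alg2_centers_outliers :: "'a set \<Rightarrow> ('a \<Rightarrow> 'a \<Rightarrow> real) \<Rightarrow> nat \<Rightarrow> nat
    \<Rightarrow> 'a set \<Rightarrow> 'a set \<Rightarrow> bool" where
  "alg2_centers_outliers V d k q S Out \<longleftrightarrow>
     (alg2_step V d k q)\<^sup>*\<^sup>* (V, {}) (Out, S) \<and> \<not> (Out \<noteq> {} \<and> card S < k)"

definition alg2_output :: "'a set \<Rightarrow> ('a \<Rightarrow> 'a \<Rightarrow> real) \<Rightarrow> nat \<Rightarrow> nat
    \<Rightarrow> 'a set \<Rightarrow> 'a set \<Rightarrow> ('a \<Rightarrow> 'a) \<Rightarrow> bool" where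
  "alg2_output V d k q S Out \<sigma> \<longleftrightarrow>
     alg2_centers_outliers V d k q S Out \<and>
     (\<forall>i\<in>V - Out. \<sigma> i \<in> S \<and> (\<forall>h\<in>S. d i (\<sigma> i) \<le> d i h))"

definition fairness_ratio :: "'a set \<Rightarrow> ('a \<Rightarrow> 'a \<Rightarrow> real) \<Rightarrow> nat \<Rightarrow> nat
    \<Rightarrow> 'a set \<Rightarrow> ('a \<Rightarrow> 'a) \<Rightarrow> real" where
  "fairness_ratio V d k q Out \<sigma> = Max ((\<lambda>i. d (\<sigma> i) i / NR V d k q i) ` (V - Out))"

end

theory Submission
  imports Defs
begin

text \<open>A point leaves the pool P only when it lies within twice its own radius NR of the
  centre just opened, so at termination every non-outlier has some centre, hence also its
  nearest one, within 2 NR. The opened centre s always leaves P because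
  d s s = 0 \<le> 2 NR s; therefore centres are never outliers and V - O is nonempty, so
  the maximum defining the fairness ratio ranges over a nonempty set.\<close>

lemma nr_rank_le_card:
  assumes "k \<ge> 1"
  shows "nr_rank V k q \<le> card V"
proof -
  have "(real (card V) - real q) / real k \<le> real (card V)"
  proof -
    have "real (card V) * 1 \<le> real (card V) * real k"
      using assms by (intro mult_left_mono) auto
    then have "real (card V) - real q \<le> real (card V) * real k"
      by linarith
    then show ?thesis
      using assms by (simp add: divide_le_eq)
  qed
  then show ?thesis
    unfolding nr_rank_def by (simp add: ceiling_le_iff nat_le_iff)
qed

lemma NR_in_distances:
  assumes "finite V" "V \<noteq> {}" "k \<ge> 1"
  shows "NR V d k q i \<in> d i ` V"
proof -
  let ?xs = "sorted_list_of_multiset (image_mset (d i) (mset_set V))"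
  have "length ?xs = card V"
    by (metis mset_sorted_list_of_multiset size_image_mset size_mset size_mset_set)
  moreover have "card V > 0"
    using assms(1,2) by auto
  ultimately have "nr_rank V k q - 1 < length ?xs"
    using nr_rank_le_card[OF assms(3), of V q] by linarith
  then have "NR V d k q i \<in> set ?xs"
    unfolding NR_def by (rule nth_mem)
  then show ?thesis
    using assms(1) by simp
qed

lemma NR_nonneg:
  assumes "finite V" "V \<noteq> {}" "k \<ge> 1" "is_metric_on V d" "i \<in> V"
  shows "NR V d k q i \<ge> 0"
proof -
  obtain j where "j \<in> V" "NR V d k q i = d i j"
    using NR_in_distances[OF assms(1-3), of d q i] by blast
  then show ?thesis
    using assms(4,5) unfolding is_metric_on_def by simp
qed

lemma alg2_stepE:
  assumes "alg2_step V d k q (P, S) (P', S')"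
  obtains s where "s \<in> P" "P' = {i\<in>P. d i s > 2 * NR V d k q i}" "S' = insert s S"
  using assms unfolding alg2_step_def by auto

lemma alg2_reachable_covered:
  assumes "(alg2_step V d k q)\<^sup>*\<^sup>* (V, {}) (P, S)" "i \<in> V - P"
  shows "\<exists>s\<in>S. d i s \<le> 2 * NR V d k q i"
  using assms
proof (induction rule: rtranclp_induct2)
  case (step P S P' S')
  then obtain s where "s \<in> P" "P' = {i\<in>P. d i s > 2 * NR V d k q i}" "S' = insert s S"
    by (auto elim: alg2_stepE)
  with step.IH step.prems show ?case
    by (cases "i \<in> P") auto
qed simp

lemma alg2_reachable_centers_disjoint:
  assumes "(alg2_step V d k q)\<^sup>*\<^sup>* (V, {}) (P, S)"
    and "\<And>s. s \<in> V \<Longrightarrow> d s s \<le> 2 * NR V d k q s"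
  shows "P \<subseteq> V \<and> S \<subseteq> V \<and> S \<inter> P = {}"
  using assms(1)
proof (induction rule: rtranclp_induct2)
  case (step P S P' S')
  then obtain s where "s \<in> P" "P' = {i\<in>P. d i s > 2 * NR V d k q i}" "S' = insert s S"
    by (auto elim: alg2_stepE)
  moreover have "s \<in> V"
    using \<open>s \<in> P\<close> step.IH by blast
  then have "s \<notin> P'"
    using assms(2)[of s] \<open>P' = _\<close> by simp
  ultimately show ?case
    using step.IH by blast
qed simp

lemma alg2_output_reachable:
  assumes "alg2_output V d k q S Out \<sigma>"
  shows "(alg2_step V d k q)\<^sup>*\<^sup>* (V, {}) (Out, S)"
  using assms unfolding alg2_output_def alg2_centers_outliers_def by simp

lemma alg2_output_assignment_le:
  assumes "alg2_output V d k q S Out \<sigma>" "i \<in> V - Out"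
  shows "d i (\<sigma> i) \<le> 2 * NR V d k q i"
proof -
  obtain s where "s \<in> S" "d i s \<le> 2 * NR V d k q i"
    using alg2_reachable_covered[OF alg2_output_reachable[OF assms(1)] assms(2)] by blast
  moreover have "d i (\<sigma> i) \<le> d i s"
    using assms \<open>s \<in> S\<close> unfolding alg2_output_def by simp
  ultimately show ?thesis
    by linarith
qed

lemma alg2_output_non_outliers_nonempty:
  assumes "alg2_output V d k q S Out \<sigma>" "V \<noteq> {}" "k \<ge> 1"
    and "\<And>s. s \<in> V \<Longrightarrow> d s s \<le> 2 * NR V d k q s"
  shows "V - Out \<noteq> {}"
proof (cases "Out = {}")
  case True
  then show ?thesis
    using assms(2) by simp
next
  case False
  have "\<not> (Out \<noteq> {} \<and> card S < k)"
    using assms(1) unfolding alg2_output_def alg2_centers_outliers_def by simp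
  with False assms(3) obtain s where "s \<in> S"
    by fastforce
  moreover have "S \<subseteq> V" "S \<inter> Out = {}"
    using alg2_reachable_centers_disjoint[OF alg2_output_reachable[OF assms(1)] assms(4)] by auto
  ultimately show ?thesis
    by blast
qed

lemma divide_le_if_le_mult:
  fixes x y c :: real
  assumes "0 \<le> x" "0 \<le> c" "x \<le> c * y"
  shows "x / y \<le> c"
proof (cases "y > 0")
  case False
  then have "x / y \<le> 0"
    using assms(1) by (simp add: divide_nonneg_nonpos)
  with assms(2) show ?thesis
    by linarith
qed (use assms(3) in \<open>simp add: divide_le_eq mult.commute\<close>)

theorem lemma3:
  fixes V :: "'a set" and d :: "'a \<Rightarrow> 'a \<Rightarrow> real" and k q :: nat
    and S Out :: "'a set" and \<sigma> :: "'a \<Rightarrow> 'a"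
  assumes "finite V" and "V \<noteq> {}"
    and "is_metric_on V d"
    and "k \<ge> 1" and "q < card V"
    and "alg2_output V d k q S Out \<sigma>"
  shows "fairness_ratio V d k q Out \<sigma> \<le> 2"
proof -
  have centre_kept_out: "d s s \<le> 2 * NR V d k q s" if "s \<in> V" for s
    using NR_nonneg[OF assms(1,2,4,3) that] assms(3) that unfolding is_metric_on_def by simp
  have "S \<subseteq> V"
    using alg2_reachable_centers_disjoint[OF alg2_output_reachable[OF assms(6)] centre_kept_out]
    by blast
  have "d (\<sigma> i) i / NR V d k q i \<le> 2" if "i \<in> V - Out" for i
  proof -
    have "\<sigma> i \<in> S"
      using assms(6) that unfolding alg2_output_def by simp
    then have "\<sigma> i \<in> V"
      using \<open>S \<subseteq> V\<close> by blast
    then have "d (\<sigma> i) i = d i (\<sigma> i)" "0 \<le> d i (\<sigma> i)"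
      using assms(3) that unfolding is_metric_on_def by auto
    then show ?thesis
      using divide_le_if_le_mult alg2_output_assignment_le[OF assms(6) that] by simp
  qed
  moreover have "V - Out \<noteq> {}"
    using alg2_output_non_outliers_nonempty[OF assms(6,2,4) centre_kept_out] .
  ultimately show ?thesis
    unfolding fairness_ratio_def using assms(1) by simp
qed

end
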